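(* Let $1\le d<n$, $r=d(n-d)$, $\mathfrak C$ a maximal chain in $I(d,n)$, $\sigma=\sigma_{\mathfrak C}$, and let $1\le t\le r-1$ be such that $\sigma s_t<_R\sigma$. Then $E_t(\mathfrak C)\neq0$.
   Context: $I(d,n)$: $d$-subsets of $\{1,\dots,n\}$ as increasing sequences, ordered by $\underline i\le\underline j$ iff $i_k\le j_k$ for all $k$. Maximal chains $\underline i_r>\cdots>\underline i_0$; compared lexicographically via concatenated strings; $\mathfrak C_{\mathrm{right}}$ the smallest. Root operators $f_{s,h}$ ($1\le h\le d$, $h\le s<n-d+h$): $f_{s,h}(i_1\cdots i_d)$ replaces $i_h=s$ by $s+1$ if $i_h=s$ and ($h=d$ or $i_{h+1}\ge s+2$), else $0$. Along a maximal chain $\underline i_t=f_{s_t,h_t}(\underline i_{t-1})$, each admissible pair occurring exactly once; $\tilde f_t:=f_{s_t,h_t}$ for $\mathfrak C_{\mathrm{right}}$; $\sigma_{\mathfrak C}\in\mathsf S_r$ is defined by: the operator from $\underline i_{t-1}$ to $\underline i_t$ in $\mathfrak C$ is $\tilde f_{\sigma_{\mathfrak C}(t)}$. If the Bruhat interval $[\underline i_{t-1},\underline i_{t+1}]$ has 4 elements $\{\underline i_{t-1},\underline i_t,\underline i'_t,\underline i_{t+1}\}$ and $\underline i_t>_{lex}\underline i'_t$ (left peak), $E_t(\mathfrak C)$ is the chain with $\underline i_t$ replaced by $\underline i'_t$; otherwise $E_t(\mathfrak C)=0$. $s_t=(t,t+1)$, and $\le_R$ is the right weak Bruhat order on $\mathsf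 S_r$. *)

theory Defs
  imports "HOL-Combinatorics.Combinatorics"
begin

text \<open>Elements of I(d,n): d-subsets of {1..n}, as strictly increasing lists of length d.\<close>
definition Iset :: "nat \<Rightarrow> nat \<Rightarrow> nat list set" where
  "Iset d n = {i. length i = d \<and> sorted_wrt (<) i \<and> set i \<subseteq> {1..n}}"

definition bru_le :: "nat list \<Rightarrow> nat list \<Rightarrow> bool" where
  "bru_le i j \<longleftrightarrow> length i = length j \<and> (\<forall>k<length i. i ! k \<le> j ! k)"

definition bru_less :: "nat list \<Rightarrow> nat list \<Rightarrow> bool" where
  "bru_less i j \<longleftrightarrow> bru_le i j \<and> i \<noteq> j"

definition lex_less :: "nat list \<Rightarrow> nat list \<Rightarrow> bool" where
  "lex_less x y \<longleftrightarrow> (x, y) \<in> lexord {(a, b). a < b}"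

text \<open>A maximal chain i_r > ... > i_0 is represented by the list [i_0, i_1, ..., i_r]
  (so C ! t = i_t): its set of elements is a chain in I(d,n) which is maximal
  with respect to inclusion.\<close>
definition max_chain :: "nat \<Rightarrow> nat \<Rightarrow> nat list list \<Rightarrow> bool" where
  "max_chain d n C \<longleftrightarrow> C \<noteq> [] \<and> set C \<subseteq> Iset d n \<and> sorted_wrt bru_less C \<and>
     (\<forall>x\<in>Iset d n. x \<notin> set C \<longrightarrow> \<not> (\<forall>y\<in>set C. bru_le x y \<or> bru_le y x))"

definition chain_lex_less :: "nat list list \<Rightarrow> nat list list \<Rightarrow> bool" where
  "chain_lex_less C C' \<longleftrightarrow> lex_less (concat (rev C)) (concat (rev C'))"

definition C_right :: "nat \<Rightarrow> nat \<Rightarrow> nat list list" where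
  "C_right d n = (THE C. max_chain d n C \<and>
     (\<forall>C'. max_chain d n C' \<longrightarrow> C' = C \<or> chain_lex_less C C'))"

text \<open>Root operator f_{s,h} (h is 1-based); None plays the role of 0.\<close>
definition root_op :: "nat \<Rightarrow> nat \<Rightarrow> nat \<Rightarrow> nat list \<Rightarrow> nat list option" where
  "root_op d s h i = (if i ! (h - 1) = s \<and> (h = d \<or> i ! h \<ge> s + 2)
      then Some (i[h - 1 := s + 1]) else None)"

definition admissible :: "nat \<Rightarrow> nat \<Rightarrow> nat \<Rightarrow> nat \<Rightarrow> bool" where
  "admissible d n s h \<longleftrightarrow> 1 \<le> h \<and> h \<le> d \<and> h \<le> s \<and> s < n - d + h"

definition step_op :: "nat \<Rightarrow> nat \<Rightarrow> nat list list \<Rightarrow> nat \<Rightarrow> nat \<times> nat" where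
  "step_op d n C t = (THE p. admissible d n (fst p) (snd p) \<and>
      root_op d (fst p) (snd p) (C ! (t - 1)) = Some (C ! t))"

definition sigma :: "nat \<Rightarrow> nat \<Rightarrow> nat list list \<Rightarrow> nat \<Rightarrow> nat" where
  "sigma d n C t = (if t \<in> {1..d * (n - d)}
      then (THE u. u \<in> {1..d * (n - d)} \<and> step_op d n (C_right d n) u = step_op d n C t)
      else t)"

definition inv_len :: "nat \<Rightarrow> (nat \<Rightarrow> nat) \<Rightarrow> nat" where
  "inv_len r p = card {(i, j). i \<in> {1..r} \<and> j \<in> {1..r} \<and> i < j \<and> p j < p i}"

definition weak_le_R :: "nat \<Rightarrow> (nat \<Rightarrow> nat) \<Rightarrow> (nat \<Rightarrow> nat) \<Rightarrow> bool" where
  "weak_le_R r u w \<longleftrightarrow> u permutes {1..r} \<and> w permutes {1..r} \<and>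
     inv_len r u + inv_len r (inv u \<circ> w) = inv_len r w"

definition weak_less_R :: "nat \<Rightarrow> (nat \<Rightarrow> nat) \<Rightarrow> (nat \<Rightarrow> nat) \<Rightarrow> bool" where
  "weak_less_R r u w \<longleftrightarrow> weak_le_R r u w \<and> u \<noteq> w"

definition bru_interval :: "nat \<Rightarrow> nat \<Rightarrow> nat list \<Rightarrow> nat list \<Rightarrow> nat list set" where
  "bru_interval d n a b = {x \<in> Iset d n. bru_le a x \<and> bru_le x b}"

text \<open>E_t(C); None plays the role of 0.\<close>
definition E_op :: "nat \<Rightarrow> nat \<Rightarrow> nat list list \<Rightarrow> nat \<Rightarrow> nat list list option" where
  "E_op d n C t = (let a = C ! (t - 1); m = C ! t; b = C ! (t + 1);
       J = bru_interval d n a b in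
     if card J = 4 \<and> a \<in> J \<and> m \<in> J \<and> b \<in> J \<and>
        (\<exists>x. J - {a, m, b} = {x} \<and> lex_less x m)
     then Some (C[t := (THE x. J - {a, m, b} = {x})]) else None)"

end

(* Along a maximal chain every cover raises a single entry of i_{t-1} by one, and
   C_right raises the entries from the last to the first, each from its minimum to its
   maximum; hence sigma_C(t) is determined by the operator f_{s,h} applied at step t,
   namely sigma_C(t) = (d - h)(n - d) + (s - h) + 1.
   A right descent sigma s_t <_R sigma forces sigma(t+1) < sigma(t).  Two consecutive
   raises of the same entry occur in C_right in increasing order, so steps t and t+1 of C
   raise entries p < q.  Then [i_{t-1}, i_{t+1}] is the square {a, a+e_p, a+e_q, a+e_p+e_q},
   and a+e_q is lexicographically smaller than i_t = a+e_p: a left peak. *)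

theory Submission
  imports Defs
begin

section \<open>Raising a single entry\<close>

text \<open>Positions are counted from 0: where \<open>f\<^sub>s\<^sub>,\<^sub>h x\<close> is defined it equals \<open>incr_at x (h - 1)\<close>.\<close>
definition incr_at :: "nat list \<Rightarrow> nat \<Rightarrow> nat list" where
  "incr_at x h = x[h := Suc (x ! h)]"

definition Imin :: "nat \<Rightarrow> nat list" where
  "Imin d = map Suc [0..<d]"

definition Imax :: "nat \<Rightarrow> nat \<Rightarrow> nat list" where
  "Imax d n = map (\<lambda>i. Suc i + (n - d)) [0..<d]"

lemma length_incr_at [simp]: "length (incr_at x h) = length x"
  by (simp add: incr_at_def)

lemma nth_incr_at: "h < length x \<Longrightarrow> incr_at x h ! i = (if i = h then Suc (x ! h) else x ! i)"
  by (simp add: incr_at_def nth_list_update)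

lemma incr_at_neq: "h < length x \<Longrightarrow> incr_at x h \<noteq> x"
  by (metis n_not_Suc_n nth_incr_at)

lemma incr_at_inject: "incr_at a h = incr_at b h \<Longrightarrow> h < length a \<Longrightarrow> length a = length b \<Longrightarrow> a = b"
  by (rule nth_equalityI) (auto simp: nth_incr_at dest: arg_cong[where f="\<lambda>l. l ! _"] split: if_splits)

lemma incr_at_commute: "p < length x \<Longrightarrow> q < length x \<Longrightarrow> incr_at (incr_at x p) q = incr_at (incr_at x q) p"
  by (rule nth_equalityI) (auto simp: nth_incr_at)

lemma sum_list_incr_at: "h < length x \<Longrightarrow> sum_list (incr_at x h) = Suc (sum_list x)"
  unfolding incr_at_def using sum_list_update[of h x "Suc (x ! h)"] elem_le_sum_list[of h x] by simp

lemma sorted_wrt_less_nth_gap: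
  assumes "sorted_wrt (<) (xs :: nat list)" "i \<le> j" "j < length xs"
  shows "xs ! i + (j - i) \<le> xs ! j"
  using assms(2,3)
proof (induction j)
  case (Suc j)
  show ?case
  proof (cases "i = Suc j")
    case False
    then have "xs ! i + (j - i) \<le> xs ! j" using Suc by simp
    moreover have "xs ! j < xs ! Suc j" using sorted_wrt_nth_less[OF assms(1)] Suc.prems by simp
    ultimately show ?thesis using False Suc.prems by simp
  qed simp
qed simp

lemma Iset_nth_iff:
  "x \<in> Iset d n \<longleftrightarrow> length x = d \<and> (\<forall>i j. i < j \<longrightarrow> j < d \<longrightarrow> x ! i < x ! j) \<and>
     (\<forall>i<d. 1 \<le> x ! i \<and> x ! i \<le> n)"
  unfolding Iset_def by (auto simp: sorted_wrt_iff_nth_less in_set_conv_nth subset_iff)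

lemma Iset_nth_Suc_iff:
  "x \<in> Iset d n \<longleftrightarrow> length x = d \<and> (\<forall>i. Suc i < d \<longrightarrow> x ! i < x ! Suc i) \<and>
     (\<forall>i<d. 1 \<le> x ! i \<and> x ! i \<le> n)"
  unfolding Iset_def
  by (auto simp: sorted_wrt_iff_nth_Suc_transp in_set_conv_nth subset_iff)

lemma Iset_nth_bounds:
  assumes "x \<in> Iset d n" "k < d"
  shows "Suc k \<le> x ! k" "x ! k + (d - Suc k) \<le> n"
proof -
  have x: "sorted_wrt (<) x" "length x = d" "set x \<subseteq> {1..n}"
    using assms(1) by (auto simp: Iset_def)
  have "x ! 0 + k \<le> x ! k" using sorted_wrt_less_nth_gap[OF x(1), of 0 k] x(2) assms(2) by simp
  moreover have "1 \<le> x ! 0" using x assms(2) by (auto simp: subset_iff)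
  ultimately show "Suc k \<le> x ! k" by simp
  have "x ! k + (d - Suc k) \<le> x ! (d - 1)"
    using sorted_wrt_less_nth_gap[OF x(1), of k "d - 1"] x(2) assms(2) by simp
  moreover have "x ! (d - 1) \<le> n" using x assms(2) by (auto simp: subset_iff)
  ultimately show "x ! k + (d - Suc k) \<le> n" by simp
qed

lemma incr_at_in_Iset_iff:
  assumes "x \<in> Iset d n" "h < d"
  shows "incr_at x h \<in> Iset d n \<longleftrightarrow> x ! h < n \<and> (Suc h < d \<longrightarrow> Suc (x ! h) < x ! Suc h)"
proof -
  have len: "length x = d" and step: "\<And>i. Suc i < d \<Longrightarrow> x ! i < x ! Suc i"
    and bnd: "\<And>i. i < d \<Longrightarrow> 1 \<le> x ! i \<and> x ! i \<le> n"
    using assms(1) by (auto simp: Iset_nth_Suc_iff)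
  have nth: "\<And>i. incr_at x h ! i = (if i = h then Suc (x ! h) else x ! i)"
    using len assms(2) by (simp add: nth_incr_at)
  show ?thesis
  proof
    assume "incr_at x h \<in> Iset d n"
    then have "Suc h < d \<longrightarrow> incr_at x h ! h < incr_at x h ! Suc h" "incr_at x h ! h \<le> n"
      using assms(2) by (auto simp: Iset_nth_Suc_iff)
    then show "x ! h < n \<and> (Suc h < d \<longrightarrow> Suc (x ! h) < x ! Suc h)"
      by (simp add: nth)
  next
    assume "x ! h < n \<and> (Suc h < d \<longrightarrow> Suc (x ! h) < x ! Suc h)"
    then have h: "x ! h < n" "Suc h < d \<Longrightarrow> Suc (x ! h) < x ! Suc h" by auto
    have "incr_at x h ! i < incr_at x h ! Suc i" if "Suc i < d" for i
      using h(2) step[OF that] step[of h] that by (auto simp: nth)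
    moreover have "1 \<le> incr_at x h ! i \<and> incr_at x h ! i \<le> n" if "i < d" for i
      using h(1) bnd[OF that] by (simp add: nth)
    ultimately show "incr_at x h \<in> Iset d n"
      using len by (simp add: Iset_nth_Suc_iff)
  qed
qed

lemma Imin_in_Iset: "d \<le> n \<Longrightarrow> Imin d \<in> Iset d n"
  by (auto simp: Iset_nth_iff Imin_def)

lemma Imax_in_Iset: "d \<le> n \<Longrightarrow> Imax d n \<in> Iset d n"
  by (auto simp: Iset_nth_iff Imax_def)

lemma sum_list_Imax: "sum_list (Imax d n) = sum_list (Imin d) + d * (n - d)"
proof -
  have "sum_list (map (\<lambda>i. Suc i + c) [0..<d]) = sum_list (map Suc [0..<d]) + d * c" for c
    by (induction d) auto
  then show ?thesis unfolding Imax_def Imin_def .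
qed

lemma bru_le_refl: "bru_le x x"
  by (simp add: bru_le_def)

lemma bru_le_trans: "bru_le x y \<Longrightarrow> bru_le y z \<Longrightarrow> bru_le x z"
  unfolding bru_le_def by (metis le_trans)

lemma bru_le_antisym: "bru_le x y \<Longrightarrow> bru_le y x \<Longrightarrow> x = y"
  unfolding bru_le_def by (metis le_antisym nth_equalityI)

lemma Imin_bru_le: "x \<in> Iset d n \<Longrightarrow> bru_le (Imin d) x"
  using Iset_nth_bounds(1) by (auto simp: bru_le_def Imin_def Iset_def)

lemma bru_le_Imax: "x \<in> Iset d n \<Longrightarrow> bru_le x (Imax d n)"
  using Iset_nth_bounds(2)[of x d n] by (fastforce simp: bru_le_def Imax_def Iset_def)

lemma bru_le_incr_at: "h < length x \<Longrightarrow> bru_le x (incr_at x h)"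
  by (simp add: bru_le_def nth_incr_at)

lemma bru_le_incr_at_cases:
  assumes "bru_le a x" "bru_le x (incr_at a h)" "h < length a"
  shows "x = a \<or> x = incr_at a h"
proof -
  have len: "length x = length a" using assms by (simp add: bru_le_def)
  have others: "\<forall>i<length a. i \<noteq> h \<longrightarrow> x ! i = a ! i"
    using assms by (fastforce simp: bru_le_def nth_incr_at)
  have "x ! h = a ! h \<or> x ! h = Suc (a ! h)"
    using assms len by (fastforce simp: bru_le_def nth_incr_at)
  then show ?thesis
  proof
    assume "x ! h = a ! h"
    then have "x = a" using others len by (metis nth_equalityI)
    then show ?thesis ..
  next
    assume "x ! h = Suc (a ! h)"
    then have "x = incr_at a h" using others len assms(3) by (intro nth_equalityI) (auto simp: nth_incr_at)
    then show ?thesis ..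
  qed
qed

lemma bru_less_imp_incr_at_le:
  assumes x: "x \<in> Iset d n" and y: "y \<in> Iset d n" and "bru_less x y"
  obtains h where "h < d" "incr_at x h \<in> Iset d n" "bru_le (incr_at x h) y"
proof -
  have lx: "length x = d" and ly: "length y = d" using x y by (auto simp: Iset_def)
  have le: "\<forall>k<d. x ! k \<le> y ! k" using assms(3) lx by (simp add: bru_less_def bru_le_def)
  define K where "K = {k. k < d \<and> x ! k < y ! k}"
  have "K \<noteq> {}"
  proof
    assume "K = {}"
    then have "x = y" using le lx ly by (intro nth_equalityI) (force simp: K_def)+
    then show False using assms(3) by (simp add: bru_less_def)
  qed
  have fin: "finite K" by (simp add: K_def)
  define h where "h = Max K"
  have "h \<in> K" unfolding h_def using fin \<open>K \<noteq> {}\<close> by (rule Max_in)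
  then have hd: "h < d" and hlt: "x ! h < y ! h" by (auto simp: K_def)
  have above: "x ! j = y ! j" if "h < j" "j < d" for j
  proof -
    have "j \<notin> K" using that Max_ge[OF fin, of j] h_def by force
    then show ?thesis using le that by (force simp: K_def)
  qed
  have "x ! h < n" using hlt Iset_nth_bounds(2)[OF y hd] by simp
  moreover have "Suc (x ! h) < x ! Suc h" if "Suc h < d"
  proof -
    have "y ! h < y ! Suc h" using y that by (simp add: Iset_nth_Suc_iff)
    then show ?thesis using hlt above[of "Suc h"] that by simp
  qed
  ultimately have "incr_at x h \<in> Iset d n" using incr_at_in_Iset_iff[OF x hd] by blast
  moreover have "bru_le (incr_at x h) y"
    using le hlt lx ly hd by (auto simp: bru_le_def nth_incr_at Suc_le_eq)
  ultimately show ?thesis using hd that by blast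
qed

section \<open>Maximal chains\<close>

locale maximal_chain =
  fixes d n :: nat and C :: "nat list list"
  assumes d_le_n: "d \<le> n" and max_chain: "max_chain d n C"
begin

lemma nonempty: "C \<noteq> []"
  using max_chain by (simp add: max_chain_def)

lemma nth_in_Iset: "k < length C \<Longrightarrow> C ! k \<in> Iset d n"
  using max_chain by (auto simp: max_chain_def)

lemma nth_bru_less: "i < j \<Longrightarrow> j < length C \<Longrightarrow> bru_less (C ! i) (C ! j)"
  using max_chain by (simp add: max_chain_def sorted_wrt_iff_nth_less)

lemma nth_bru_le: "i \<le> j \<Longrightarrow> j < length C \<Longrightarrow> bru_le (C ! i) (C ! j)"
  using nth_bru_less[of i j] by (cases "i = j") (auto simp: bru_le_refl bru_less_def)

lemma comparable_imp_mem:
  assumes "x \<in> Iset d n" "\<And>j. j < length C \<Longrightarrow> bru_le x (C ! j) \<or> bru_le (C ! j) x"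
  obtains j where "j < length C" "C ! j = x"
  using assms max_chain unfolding max_chain_def by (metis in_set_conv_nth)

lemma nth_0: "C ! 0 = Imin d"
proof -
  obtain j where j: "j < length C" "C ! j = Imin d"
    using comparable_imp_mem[OF Imin_in_Iset[OF d_le_n]] Imin_bru_le nth_in_Iset by blast
  then have "bru_le (C ! 0) (Imin d)" using nth_bru_le[of 0 j] by simp
  moreover have "bru_le (Imin d) (C ! 0)" using Imin_bru_le[OF nth_in_Iset[of 0]] nonempty by simp
  ultimately show ?thesis by (rule bru_le_antisym)
qed

lemma nth_last: "C ! (length C - 1) = Imax d n"
proof -
  obtain j where j: "j < length C" "C ! j = Imax d n"
    using comparable_imp_mem[OF Imax_in_Iset[OF d_le_n]] bru_le_Imax nth_in_Iset by blast
  have "bru_le (C ! (length C - 1)) (Imax d n)" using bru_le_Imax nth_in_Iset nonempty by simp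
  moreover have "bru_le (Imax d n) (C ! (length C - 1))" using nth_bru_le[of j "length C - 1"] j by simp
  ultimately show ?thesis by (rule bru_le_antisym)
qed

text \<open>A cover of \<open>C ! k\<close> below \<open>C ! Suc k\<close> is comparable with every element of the chain, so
  maximality puts it into the chain, where it can only sit at position \<open>Suc k\<close>.\<close>
lemma nth_Suc_eq_incr_at:
  assumes k: "Suc k < length C"
  obtains h where "h < d" "C ! Suc k = incr_at (C ! k) h"
proof -
  let ?x = "C ! k" and ?y = "C ! Suc k"
  have x: "?x \<in> Iset d n" and y: "?y \<in> Iset d n" and "bru_less ?x ?y"
    using k nth_in_Iset nth_bru_less by simp_all
  then obtain h where h: "h < d" "incr_at ?x h \<in> Iset d n" "bru_le (incr_at ?x h) ?y"
    by (rule bru_less_imp_incr_at_le)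
  let ?z = "incr_at ?x h"
  have lx: "length ?x = d" using x by (simp add: Iset_def)
  have xz: "bru_le ?x ?z" and "?z \<noteq> ?x" using h(1) lx by (simp_all add: bru_le_incr_at incr_at_neq)
  have "bru_le ?z (C ! j) \<or> bru_le (C ! j) ?z" if "j < length C" for j
  proof (cases "j \<le> k")
    case True
    then show ?thesis using nth_bru_le[of j k] k xz bru_le_trans by simp
  next
    case False
    then show ?thesis using nth_bru_le[of "Suc k" j] that h(3) bru_le_trans by simp
  qed
  then obtain j where j: "j < length C" "C ! j = ?z" using comparable_imp_mem[OF h(2)] by blast
  show ?thesis
  proof (cases "j \<le> k")
    case True
    then have "bru_le ?z ?x" using nth_bru_le[of j k] j k by simp
    then show ?thesis using xz \<open>?z \<noteq> ?x\<close> bru_le_antisym by blast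
  next
    case False
    then have "bru_le ?y ?z" using nth_bru_le[of "Suc k" j] j by simp
    then show ?thesis using h bru_le_antisym that by blast
  qed
qed

lemma sum_list_nth: "k < length C \<Longrightarrow> sum_list (C ! k) = sum_list (Imin d) + k"
proof (induction k)
  case (Suc k)
  then obtain h where "h < d" "C ! Suc k = incr_at (C ! k) h" using nth_Suc_eq_incr_at by blast
  moreover have "length (C ! k) = d" using nth_in_Iset Suc.prems by (simp add: Iset_def)
  ultimately show ?case using Suc sum_list_incr_at by simp
qed (simp add: nth_0)

lemma length_eq: "length C = Suc (d * (n - d))"
  using sum_list_nth[of "length C - 1"] nth_last sum_list_Imax nonempty by simp

end

section \<open>Root operators and the lexicographic order\<close>

lemma root_op_incr_at:
  assumes x: "x \<in> Iset d n" and h: "h < d" and incr: "incr_at x h \<in> Iset d n"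
  shows "admissible d n (x ! h) (Suc h)" "root_op d (x ! h) (Suc h) x = Some (incr_at x h)"
proof -
  have lx: "length x = d" using x by (simp add: Iset_def)
  have "Suc h \<le> x ! h" using Iset_nth_bounds(1)[OF x h] .
  moreover have "Suc (x ! h) + (d - Suc h) \<le> n"
    using Iset_nth_bounds(2)[OF incr h] lx h by (simp add: nth_incr_at)
  ultimately show "admissible d n (x ! h) (Suc h)" using h by (simp add: admissible_def)
  have "Suc h < d \<longrightarrow> Suc (x ! h) < x ! Suc h" using incr_at_in_Iset_iff[OF x h] incr by blast
  then show "root_op d (x ! h) (Suc h) x = Some (incr_at x h)"
    using h by (auto simp: root_op_def incr_at_def)
qed

lemma root_op_eq_incr_atD:
  assumes "admissible d n s h'" "root_op d s h' x = Some (incr_at x h)" "h < length x" "length x = d"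
  shows "s = x ! h \<and> h' = Suc h"
proof -
  have s: "x ! (h' - 1) = s" and eq: "x[h' - 1 := Suc s] = incr_at x h"
    using assms(2) by (auto simp: root_op_def split: if_splits)
  have h': "h' - 1 < d" "1 \<le> h'" using assms(1) by (auto simp: admissible_def)
  have "h' - 1 = h"
  proof (rule ccontr)
    assume "h' - 1 \<noteq> h"
    then have "incr_at x h ! (h' - 1) = s" using s assms(3) by (simp add: nth_incr_at)
    moreover have "x[h' - 1 := Suc s] ! (h' - 1) = Suc s" using h' assms(4) by simp
    ultimately show False using eq by simp
  qed
  then show ?thesis using s h' by auto
qed

lemma step_op_eq:
  assumes "L ! (k - 1) \<in> Iset d n" "h < d" "L ! k = incr_at (L ! (k - 1)) h" "L ! k \<in> Iset d n"
  shows "step_op d n L k = (L ! (k - 1) ! h, Suc h)"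
  unfolding step_op_def
proof (rule the_equality)
  show "admissible d n (fst (L ! (k - 1) ! h, Suc h)) (snd (L ! (k - 1) ! h, Suc h)) \<and>
      root_op d (fst (L ! (k - 1) ! h, Suc h)) (snd (L ! (k - 1) ! h, Suc h)) (L ! (k - 1)) = Some (L ! k)"
    using root_op_incr_at[OF assms(1,2)] assms(3,4) by simp
next
  have "length (L ! (k - 1)) = d" using assms(1) by (simp add: Iset_def)
  then show "p = (L ! (k - 1) ! h, Suc h)"
    if "admissible d n (fst p) (snd p) \<and> root_op d (fst p) (snd p) (L ! (k - 1)) = Some (L ! k)" for p
    using that root_op_eq_incr_atD[of d n "fst p" "snd p" "L ! (k - 1)" h] assms(2,3)
    by (cases p) auto
qed

lemma lex_less_nthI:
  assumes "p < length x" "p < length y" "\<And>i. i < p \<Longrightarrow> x ! i = y ! i" "x ! p < y ! p"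
  shows "lex_less x y"
  unfolding lex_less_def lexord_take_index_conv
  using assms by (intro disjI2 exI[of _ p]) (auto intro: nth_equalityI)

lemma lex_less_if_incr_at_eq:
  assumes "incr_at a p = incr_at b q" "p < q" "q < length a" "length a = length b"
  shows "lex_less a b"
proof (rule lex_less_nthI)
  have eq: "incr_at a p ! i = incr_at b q ! i" for i using assms(1) by simp
  then show "a ! i = b ! i" if "i < p" for i
    using that assms(2-4) by (metis less_trans nat_neq_iff nth_incr_at)
  show "a ! p < b ! p" using eq[of p] assms(2-4) by (simp add: nth_incr_at)
qed (use assms in auto)

lemma lexord_append_same_length:
  assumes "(a, b) \<in> lexord R" "length a = length b"
  shows "(u @ a @ v, u @ b @ w) \<in> lexord R"
proof -
  obtain i where i: "i < length a" "take i a = take i b" "(a ! i, b ! i) \<in> R"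
    using assms by (auto simp: lexord_take_index_conv)
  have "a = take i a @ a ! i # drop (Suc i) a" "b = take i a @ b ! i # drop (Suc i) b"
    using i assms(2) by (metis id_take_nth_drop)+
  then have "u @ a @ v = (u @ take i a) @ a ! i # (drop (Suc i) a @ v)"
    and "u @ b @ w = (u @ take i a) @ b ! i # (drop (Suc i) b @ w)"
    by (metis append.assoc append_Cons)+
  then show ?thesis using i(3) by (simp only: lexord_append_left_rightI)
qed

lemma chain_lex_lessI:
  assumes "length L = length L'" "j < length L" "drop (Suc j) L = drop (Suc j) L'"
    "lex_less (L ! j) (L' ! j)" "length (L ! j) = length (L' ! j)"
  shows "chain_lex_less L L'"
proof -
  have split: "concat (rev M) = concat (rev (drop (Suc j) M)) @ M ! j @ concat (rev (take j M))"
    if "j < length M" for M :: "nat list list"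
    using that by (subst id_take_nth_drop[OF that]) simp
  show ?thesis
    unfolding chain_lex_less_def split[OF assms(2)] split[of L', unfolded assms(1)[symmetric], OF assms(2)] assms(3)
    using assms(4,5) unfolding lex_less_def by (rule lexord_append_same_length)
qed

section \<open>The right chain\<close>

lemma mult_add_less_bounds_eq:
  fixes c c' m q :: nat
  assumes "q < m" "c' * m \<le> c * m + q" "c * m + q < c' * m + m"
  shows "c' = c"
proof -
  have "c' * m < Suc c * m" "c * m < Suc c' * m" using assms by simp_all
  then show ?thesis by (simp only: mult_less_cancel2) simp
qed

lemma min_Suc_diff:
  "min m (Suc k - a) = (if a \<le> k \<and> k < a + m then Suc (min m (k - a)) else min m (k - a))"
  for m k a :: nat
  by auto

text \<open>The \<open>k\<close>-th element of the right chain: the last entry is raised from its minimum to its maximum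
  first, then the one before it, and so on; entry \<open>i\<close> (counted from 0) moves during the steps
  \<open>(d - Suc i) * (n - d) + 1, \<dots>, (d - i) * (n - d)\<close>.\<close>
definition right_elem :: "nat \<Rightarrow> nat \<Rightarrow> nat \<Rightarrow> nat list" where
  "right_elem d n k = map (\<lambda>i. Suc i + min (n - d) (k - (d - Suc i) * (n - d))) [0..<d]"

lemma length_right_elem [simp]: "length (right_elem d n k) = d"
  by (simp add: right_elem_def)

lemma nth_right_elem: "i < d \<Longrightarrow> right_elem d n k ! i = Suc i + min (n - d) (k - (d - Suc i) * (n - d))"
  by (simp add: right_elem_def)

lemma right_elem_in_Iset:
  assumes "d \<le> n"
  shows "right_elem d n k \<in> Iset d n"
proof -
  have "right_elem d n k ! i < right_elem d n k ! Suc i" if "Suc i < d" for i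
  proof -
    have "(d - Suc (Suc i)) * (n - d) \<le> (d - Suc i) * (n - d)" by (rule mult_le_mono1) simp
    then have "min (n - d) (k - (d - Suc i) * (n - d)) \<le> min (n - d) (k - (d - Suc (Suc i)) * (n - d))"
      by (intro min.mono diff_le_mono2) simp_all
    moreover have "i < d" using that by simp
    ultimately show ?thesis using that by (simp only: nth_right_elem)
  qed
  then show ?thesis using assms by (auto simp: Iset_nth_Suc_iff nth_right_elem)
qed

lemma right_elem_0: "right_elem d n 0 = Imin d"
  by (simp add: right_elem_def Imin_def)

lemma right_elem_top: "right_elem d n (d * (n - d)) = Imax d n"
proof -
  have "min (n - d) (d * (n - d) - (d - Suc i) * (n - d)) = n - d" if "i < d" for i
  proof -
    have "Suc (d - Suc i) \<le> d" using that by simp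
    from mult_le_mono1[OF this, of "n - d"] show ?thesis by (auto simp: min_def)
  qed
  then show ?thesis by (simp add: right_elem_def Imax_def)
qed

lemma right_elem_mono: "k \<le> k' \<Longrightarrow> bru_le (right_elem d n k) (right_elem d n k')"
  by (auto simp: bru_le_def nth_right_elem intro: min.mono)

lemma right_elem_Suc:
  assumes "c < d" "q < n - d"
  shows "right_elem d n (Suc (c * (n - d) + q)) = incr_at (right_elem d n (c * (n - d) + q)) (d - Suc c)"
proof (rule nth_equalityI)
  fix i assume "i < length (right_elem d n (Suc (c * (n - d) + q)))"
  then have i: "i < d" by simp
  have "(d - Suc i) * (n - d) \<le> c * (n - d) + q \<and> c * (n - d) + q < (d - Suc i) * (n - d) + (n - d)
      \<longleftrightarrow> i = d - Suc c"
    using mult_add_less_bounds_eq[OF assms(2), of "d - Suc i" c] assms i by auto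
  then show "right_elem d n (Suc (c * (n - d) + q)) ! i = incr_at (right_elem d n (c * (n - d) + q)) (d - Suc c) ! i"
    using i assms by (simp add: nth_right_elem nth_incr_at min_Suc_diff Suc_diff_Suc trans_less_add1 del: add_Suc_right)
qed simp

lemma nth_right_elem_moving:
  assumes "c < d" "q < n - d"
  shows "right_elem d n (c * (n - d) + q) ! (d - Suc c) = d - c + q"
  using assms by (simp add: nth_right_elem Suc_diff_Suc)

lemma nth_right_elem_Suc_below:
  assumes "c < d" "q < n - d" "i < d - Suc c"
  shows "right_elem d n (Suc (c * (n - d) + q)) ! i = Suc i"
proof -
  have "Suc (c * (n - d) + q) \<le> Suc c * (n - d)" using assms(2) by simp
  also have "\<dots> \<le> (d - Suc i) * (n - d)" using assms by (intro mult_le_mono1) simp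
  finally show ?thesis using assms by (simp add: nth_right_elem)
qed

lemma right_index_decompose:
  fixes k d n :: nat
  assumes "k < d * (n - d)"
  obtains c q where "c < d" "q < n - d" "k = c * (n - d) + q"
proof
  have "0 < n - d" using assms by (cases "n - d") simp_all
  then show "k mod (n - d) < n - d" by simp
  show "k div (n - d) < d" using assms by (simp add: less_mult_imp_div_less)
qed (metis div_mult_mod_eq)

lemma sum_list_right_elem: "k \<le> d * (n - d) \<Longrightarrow> sum_list (right_elem d n k) = sum_list (Imin d) + k"
proof (induction k)
  case (Suc k)
  then obtain c q where "c < d" "q < n - d" "k = c * (n - d) + q"
    by (metis Suc_le_lessD right_index_decompose)
  then show ?case using Suc right_elem_Suc sum_list_incr_at[of "d - Suc c" "right_elem d n k"] by simp
qed (simp add: right_elem_0)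

definition right_chain :: "nat \<Rightarrow> nat \<Rightarrow> nat list list" where
  "right_chain d n = map (right_elem d n) [0..<Suc (d * (n - d))]"

lemma length_right_chain [simp]: "length (right_chain d n) = Suc (d * (n - d))"
  by (simp add: right_chain_def)

lemma nth_right_chain: "k \<le> d * (n - d) \<Longrightarrow> right_chain d n ! k = right_elem d n k"
  by (simp add: right_chain_def nth_append less_Suc_eq_le del: upt_Suc)

lemma set_right_chain: "set (right_chain d n) = right_elem d n ` {0..d * (n - d)}"
  unfolding right_chain_def set_map set_upt atLeastLessThanSuc_atLeastAtMost by (rule refl)

lemma right_elem_Suc_eq_incr_at:
  assumes "k < d * (n - d)"
  obtains p where "p < d" "right_elem d n (Suc k) = incr_at (right_elem d n k) p"
proof -
  obtain c q where "c < d" "q < n - d" "k = c * (n - d) + q"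
    using assms by (rule right_index_decompose)
  then show ?thesis using right_elem_Suc that[of "d - Suc c"] by simp
qed

text \<open>An element comparable with the whole right chain lies between two consecutive
  elements of it, which form a cover.\<close>
lemma comparable_right_chain_imp_mem:
  assumes x: "x \<in> Iset d n" and comp: "\<forall>y\<in>set (right_chain d n). bru_le x y \<or> bru_le y x"
  shows "x \<in> set (right_chain d n)"
proof -
  define K where "K = {k. k \<le> d * (n - d) \<and> bru_le (right_elem d n k) x}"
  have fin: "finite K" by (simp add: K_def)
  have "0 \<in> K" using Imin_bru_le[OF x] by (simp add: K_def right_elem_0)
  define k where "k = Max K"
  have "k \<in> K" unfolding k_def using fin \<open>0 \<in> K\<close> by (intro Max_in) auto
  then have kr: "k \<le> d * (n - d)" and below: "bru_le (right_elem d n k) x" by (simp_all add: K_def)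
  show ?thesis
  proof (cases "k = d * (n - d)")
    case True
    then have "x = right_elem d n k"
      using below bru_le_Imax[OF x] right_elem_top bru_le_antisym by metis
    then show ?thesis using kr by (simp add: set_right_chain)
  next
    case False
    then have kr': "k < d * (n - d)" using kr by simp
    then have "Suc k \<notin> K" using Max_ge[OF fin] k_def by force
    then have "bru_le x (right_elem d n (Suc k))"
      using comp kr' by (auto simp: K_def set_right_chain)
    moreover obtain p where "p < d" "right_elem d n (Suc k) = incr_at (right_elem d n k) p"
      using right_elem_Suc_eq_incr_at[OF kr'] .
    ultimately have "x = right_elem d n k \<or> x = right_elem d n (Suc k)"
      using bru_le_incr_at_cases[OF below] by simp
    then show ?thesis using kr' by (auto simp: set_right_chain)
  qed
qed

lemma max_chain_right_chain:
  assumes "d \<le> n"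
  shows "max_chain d n (right_chain d n)"
proof -
  have sorted: "bru_less (right_chain d n ! i) (right_chain d n ! j)"
    if "i < j" "j < length (right_chain d n)" for i j
  proof -
    have "sum_list (right_elem d n i) \<noteq> sum_list (right_elem d n j)"
      using that sum_list_right_elem[of i d n] sum_list_right_elem[of j d n] by simp
    then show ?thesis using that right_elem_mono[of i j d n] by (auto simp: nth_right_chain bru_less_def)
  qed
  show ?thesis
    unfolding max_chain_def
  proof (intro conjI ballI impI)
    show "right_chain d n \<noteq> []" by (simp add: right_chain_def)
    show "set (right_chain d n) \<subseteq> Iset d n"
      using right_elem_in_Iset[OF assms] by (auto simp: set_right_chain)
    show "sorted_wrt bru_less (right_chain d n)"
      unfolding sorted_wrt_iff_nth_less using sorted by blast
  next
    fix x assume "x \<in> Iset d n" "x \<notin> set (right_chain d n)"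
    then show "\<not> (\<forall>y\<in>set (right_chain d n). bru_le x y \<or> bru_le y x)"
      using comparable_right_chain_imp_mem by blast
  qed
qed

text \<open>The right chain keeps all entries before the raised one minimal, so any other element
  with the same successor was raised at a later entry.\<close>
lemma lex_less_if_incr_at_eq_right_elem_Suc:
  assumes "k < d * (n - d)" "y \<in> Iset d n" "h < d"
    and succ: "incr_at y h = right_elem d n (Suc k)" and "y \<noteq> right_elem d n k"
  shows "lex_less (right_elem d n k) y"
proof -
  obtain c q where c: "c < d" "q < n - d" "k = c * (n - d) + q"
    using assms(1) by (rule right_index_decompose)
  let ?p = "d - Suc c"
  have next_eq: "incr_at (right_elem d n k) ?p = incr_at y h"
    using succ right_elem_Suc[OF c(1,2)] c(3) by simp
  have ly: "length y = d" using assms(2) by (simp add: Iset_def)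
  have "h \<noteq> ?p" using next_eq assms(3,5) incr_at_inject[of "right_elem d n k" ?p y] ly by auto
  moreover have "\<not> h < ?p"
  proof
    assume "h < ?p"
    then have "Suc (y ! h) = Suc h"
      using succ[symmetric] nth_right_elem_Suc_below[OF c(1,2), of h] c(3) assms(3) ly
      by (simp add: nth_incr_at)
    then show False using Iset_nth_bounds(1)[OF assms(2,3)] by simp
  qed
  ultimately have "?p < h" by simp
  then show ?thesis using next_eq assms(3) ly by (intro lex_less_if_incr_at_eq) simp_all
qed

text \<open>Compare the chains at the last position where they differ.\<close>
lemma right_chain_lex_less:
  assumes "d \<le> n" and C: "max_chain d n C" and "C \<noteq> right_chain d n"
  shows "chain_lex_less (right_chain d n) C"
proof -
  interpret maximal_chain d n C using assms by unfold_locales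
  let ?R = "right_chain d n" and ?r = "d * (n - d)"
  define J where "J = {j. j < Suc ?r \<and> ?R ! j \<noteq> C ! j}"
  have fin: "finite J" by (simp add: J_def)
  have "J \<noteq> {}" using assms(3) length_eq by (auto simp: J_def intro: nth_equalityI)
  define j where "j = Max J"
  have "j \<in> J" unfolding j_def using fin \<open>J \<noteq> {}\<close> by (rule Max_in)
  then have "j \<le> ?r" and "?R ! j \<noteq> C ! j" by (simp_all add: J_def)
  moreover have Rj: "?R ! j = right_elem d n j" using \<open>j \<le> ?r\<close> by (rule nth_right_chain)
  ultimately have differ: "C ! j \<noteq> right_elem d n j" by simp
  have agree: "?R ! j' = C ! j'" if "j < j'" "j' < Suc ?r" for j'
  proof -
    have "j' \<notin> J" using that(1) Max_ge[OF fin, of j'] j_def by force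
    then show ?thesis using that(2) by (simp add: J_def)
  qed
  have "j \<noteq> ?r" using differ nth_last length_eq right_elem_top by auto
  then have jr: "j < ?r" using \<open>j \<le> ?r\<close> by simp
  have Cj: "C ! j \<in> Iset d n" and lC: "length (C ! j) = d"
    using nth_in_Iset length_eq jr by (simp_all add: Iset_def)
  obtain h where h: "h < d" "C ! Suc j = incr_at (C ! j) h" using nth_Suc_eq_incr_at length_eq jr by auto
  then have "incr_at (C ! j) h = right_elem d n (Suc j)" using agree[of "Suc j"] jr by (simp add: nth_right_chain)
  then have "lex_less (right_elem d n j) (C ! j)"
    using lex_less_if_incr_at_eq_right_elem_Suc[OF jr Cj h(1) _ differ] by blast
  moreover have "drop (Suc j) ?R = drop (Suc j) C" using agree length_eq by (intro nth_equalityI) auto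
  ultimately show ?thesis using chain_lex_lessI[of ?R C j] jr length_eq lC Rj by simp
qed

lemma C_right_eq_right_chain:
  assumes "d \<le> n"
  shows "C_right d n = right_chain d n"
  unfolding C_right_def
proof (rule the_equality)
  show "max_chain d n (right_chain d n) \<and>
      (\<forall>C'. max_chain d n C' \<longrightarrow> C' = right_chain d n \<or> chain_lex_less (right_chain d n) C')"
    using max_chain_right_chain[OF assms] right_chain_lex_less[OF assms] by blast
next
  fix C assume C: "max_chain d n C \<and> (\<forall>C'. max_chain d n C' \<longrightarrow> C' = C \<or> chain_lex_less C C')"
  show "C = right_chain d n"
  proof (rule ccontr)
    assume ne: "C \<noteq> right_chain d n"
    then have "chain_lex_less C (right_chain d n)" using C max_chain_right_chain[OF assms] by blast
    moreover have "chain_lex_less (right_chain d n) C" using right_chain_lex_less[OF assms] C ne by blast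
    moreover have "asym {(a, b). (a::nat) < b}" by (auto intro: asymI)
    ultimately show False using lexord_asymmetric unfolding chain_lex_less_def lex_less_def by blast
  qed
qed

lemma mult_add_less_mult: "c < d \<Longrightarrow> q < m \<Longrightarrow> c * m + q < d * m" for c d m q :: nat
  using mult_le_mono1[of "Suc c" d m] by simp

lemma step_op_right_chain:
  assumes "d \<le> n" "c < d" "q < n - d"
  shows "step_op d n (right_chain d n) (Suc (c * (n - d) + q)) = (d - c + q, d - c)"
proof -
  let ?k = "c * (n - d) + q"
  have k: "?k < d * (n - d)" using assms(2,3) by (rule mult_add_less_mult)
  have "incr_at (right_elem d n ?k) (d - Suc c) \<in> Iset d n"
    using right_elem_in_Iset[OF assms(1), of "Suc ?k"] right_elem_Suc[OF assms(2,3)] by simp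
  then have "step_op d n (right_chain d n) (Suc ?k) = (right_elem d n ?k ! (d - Suc c), Suc (d - Suc c))"
    using step_op_eq[of "right_chain d n" "Suc ?k" d n "d - Suc c"] k assms
    by (simp add: nth_right_chain right_elem_in_Iset right_elem_Suc)
  then show ?thesis using nth_right_elem_moving[OF assms(2,3)] assms(2) by simp
qed

text \<open>The step of the right chain that applies \<open>f\<^sub>s\<^sub>,\<^sub>h\<close>.\<close>
definition right_pos :: "nat \<Rightarrow> nat \<Rightarrow> nat \<Rightarrow> nat \<Rightarrow> nat" where
  "right_pos d n s h = Suc ((d - h) * (n - d) + (s - h))"

lemma step_op_right_chain_right_pos:
  assumes "d \<le> n" "admissible d n s h"
  shows "right_pos d n s h \<in> {1..d * (n - d)}" "step_op d n (right_chain d n) (right_pos d n s h) = (s, h)"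
proof -
  have c: "d - h < d" and q: "s - h < n - d" using assms by (auto simp: admissible_def)
  then show "right_pos d n s h \<in> {1..d * (n - d)}"
    using mult_add_less_mult[OF c q] by (simp add: right_pos_def)
  show "step_op d n (right_chain d n) (right_pos d n s h) = (s, h)"
    using step_op_right_chain[OF assms(1) c q] assms(2) by (simp add: right_pos_def admissible_def)
qed

lemma right_pos_step_op_right_chain:
  assumes "d \<le> n" "u \<in> {1..d * (n - d)}" "step_op d n (right_chain d n) u = (s, h)"
  shows "u = right_pos d n s h"
proof -
  have "u - 1 < d * (n - d)" using assms(2) by auto
  then obtain c q where c: "c < d" "q < n - d" "u - 1 = c * (n - d) + q"
    by (rule right_index_decompose)
  then have u: "u = Suc (c * (n - d) + q)" using assms(2) by (simp add: c(3)[symmetric])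
  then have "s = d - c + q" "h = d - c" using step_op_right_chain[OF assms(1) c(1,2)] assms(3) by simp_all
  then show ?thesis using u c(1) by (simp add: right_pos_def)
qed

lemma sigma_eq_right_pos:
  assumes "d \<le> n" "t \<in> {1..d * (n - d)}" "step_op d n C t = (s, h)" "admissible d n s h"
  shows "sigma d n C t = right_pos d n s h"
  unfolding sigma_def C_right_eq_right_chain[OF assms(1)] if_P[OF assms(2)] assms(3)
proof (rule the_equality)
  show "right_pos d n s h \<in> {1..d * (n - d)} \<and>
      step_op d n (right_chain d n) (right_pos d n s h) = (s, h)"
    using step_op_right_chain_right_pos[OF assms(1,4)] by blast
  show "u = right_pos d n s h" if "u \<in> {1..d * (n - d)} \<and> step_op d n (right_chain d n) u = (s, h)" for u
    using that right_pos_step_op_right_chain[OF assms(1)] by blast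
qed

lemma right_pos_less_imp:
  assumes "admissible d n s1 h1" "right_pos d n s2 h2 < right_pos d n s1 h1"
  shows "h1 < h2 \<or> h1 = h2 \<and> s2 < s1"
proof -
  have "\<not> h2 < h1"
  proof
    assume "h2 < h1"
    have "(d - h1) * (n - d) + (s1 - h1) < Suc (d - h1) * (n - d)"
      using assms(1) by (auto simp: admissible_def)
    also have "\<dots> \<le> (d - h2) * (n - d)"
      using \<open>h2 < h1\<close> assms(1) by (intro mult_le_mono1) (auto simp: admissible_def)
    finally show False using assms(2) by (simp add: right_pos_def)
  qed
  moreover have "s2 < s1" if "h1 = h2"
    using that assms by (simp add: right_pos_def admissible_def)
  ultimately show ?thesis by (cases "h1 = h2") simp_all
qed

context maximal_chain
begin

lemma sigma_nth:
  assumes "1 \<le> t" "t < length C" "h < d" "C ! t = incr_at (C ! (t - 1)) h"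
  shows "sigma d n C t = right_pos d n (C ! (t - 1) ! h) (Suc h)"
proof -
  have a: "C ! (t - 1) \<in> Iset d n" and m: "C ! t \<in> Iset d n" using assms(2) nth_in_Iset by simp_all
  have "step_op d n C t = (C ! (t - 1) ! h, Suc h)" using step_op_eq[OF a assms(3,4) m] .
  moreover have "admissible d n (C ! (t - 1) ! h) (Suc h)"
    using root_op_incr_at(1)[OF a assms(3)] assms(4) m by simp
  moreover have "t \<in> {1..d * (n - d)}" using assms(1,2) length_eq by simp
  ultimately show ?thesis using sigma_eq_right_pos[OF d_le_n] by blast
qed

lemma sigma_descent_imp_less:
  assumes "1 \<le> t" "Suc t < length C" "p < d" "q < d"
    and step_p: "C ! t = incr_at (C ! (t - 1)) p" and "C ! Suc t = incr_at (C ! t) q"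
    and "sigma d n C (Suc t) < sigma d n C t"
  shows "p < q"
proof -
  have a: "C ! (t - 1) \<in> Iset d n" and m: "C ! t \<in> Iset d n" using assms(2) nth_in_Iset by simp_all
  have "admissible d n (C ! (t - 1) ! p) (Suc p)" using root_op_incr_at(1)[OF a assms(3)] step_p m by simp
  moreover have "right_pos d n (C ! t ! q) (Suc q) < right_pos d n (C ! (t - 1) ! p) (Suc p)"
    using assms sigma_nth[OF assms(1) _ assms(3) step_p] sigma_nth[of "Suc t" q] by simp
  ultimately have "p < q \<or> p = q \<and> C ! t ! q < C ! (t - 1) ! p" by (auto dest: right_pos_less_imp)
  moreover have "C ! t ! p = Suc (C ! (t - 1) ! p)" using step_p a assms(3) by (simp add: nth_incr_at Iset_def)
  ultimately show ?thesis by auto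
qed

end

section \<open>Right descents\<close>

lemma finite_inversions: "finite {(i, j). i \<in> {1..r} \<and> j \<in> {1..r} \<and> i < j \<and> f j < f i}"
  for f :: "nat \<Rightarrow> nat"
  by (rule finite_subset[of _ "{1..r} \<times> {1..r}"]) auto

lemma inv_len_transpose_pos:
  assumes "1 \<le> t" "Suc t \<le> r"
  shows "0 < inv_len r (transpose t (Suc t))"
proof -
  have "(t, Suc t) \<in> {(i, j). i \<in> {1..r} \<and> j \<in> {1..r} \<and> i < j \<and>
      transpose t (Suc t) j < transpose t (Suc t) i}"
    using assms by simp
  then show ?thesis unfolding inv_len_def using finite_inversions card_gt_0_iff by blast
qed

text \<open>If \<open>(t, t + 1)\<close> is no inversion of \<open>\<sigma>\<close>, then \<open>(i, j) \<mapsto> (s\<^sub>t i, s\<^sub>t j)\<close> maps the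
  inversions of \<open>\<sigma>\<close> injectively to inversions of \<open>\<sigma> \<circ> s\<^sub>t\<close>.\<close>
lemma inv_len_le_comp_transpose:
  assumes "\<sigma> t \<le> \<sigma> (Suc t)" "1 \<le> t" "Suc t \<le> r"
  shows "inv_len r \<sigma> \<le> inv_len r (\<sigma> \<circ> transpose t (Suc t))"
  unfolding inv_len_def
proof (rule card_inj_on_le[where f = "\<lambda>(i, j). (transpose t (Suc t) i, transpose t (Suc t) j)"])
  let ?\<tau> = "transpose t (Suc t)"
  show "inj_on (\<lambda>(i, j). (?\<tau> i, ?\<tau> j)) {(i, j). i \<in> {1..r} \<and> j \<in> {1..r} \<and> i < j \<and> \<sigma> j < \<sigma> i}"
    by (auto simp: inj_on_def dest: transpose_eq_imp_eq)
  show "(\<lambda>(i, j). (?\<tau> i, ?\<tau> j)) ` {(i, j). i \<in> {1..r} \<and> j \<in> {1..r} \<and> i < j \<and> \<sigma> j < \<sigma> i}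
      \<subseteq> {(i, j). i \<in> {1..r} \<and> j \<in> {1..r} \<and> i < j \<and> (\<sigma> \<circ> ?\<tau>) j < (\<sigma> \<circ> ?\<tau>) i}"
  proof clarify
    fix i j assume ij: "i \<in> {1..r}" "j \<in> {1..r}" "i < j" "\<sigma> j < \<sigma> i"
    then have "\<not> (i = t \<and> j = Suc t)" using assms(1) by auto
    then have "?\<tau> i < ?\<tau> j" using ij(3) by (auto simp: transpose_def)
    moreover have "?\<tau> i \<in> {1..r}" "?\<tau> j \<in> {1..r}" using ij(1,2) assms(2,3) by (auto simp: transpose_def)
    ultimately show "?\<tau> i \<in> {1..r} \<and> ?\<tau> j \<in> {1..r} \<and> ?\<tau> i < ?\<tau> j \<and> (\<sigma> \<circ> ?\<tau>) (?\<tau> j) < (\<sigma> \<circ> ?\<tau>) (?\<tau> i)"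
      using ij(4) by simp
  qed
qed (rule finite_inversions)

lemma weak_le_R_comp_transpose_imp_descent:
  assumes "weak_le_R r (\<sigma> \<circ> transpose t (Suc t)) \<sigma>" "1 \<le> t" "Suc t \<le> r"
  shows "\<sigma> (Suc t) < \<sigma> t"
proof (rule ccontr)
  let ?\<tau> = "transpose t (Suc t)"
  assume "\<not> \<sigma> (Suc t) < \<sigma> t"
  then have "inv_len r \<sigma> \<le> inv_len r (\<sigma> \<circ> ?\<tau>)" using assms(2,3) by (intro inv_len_le_comp_transpose) simp_all
  moreover have "bij \<sigma>" using assms(1) by (auto simp: weak_le_R_def permutes_bij)
  then have "inv (\<sigma> \<circ> ?\<tau>) \<circ> \<sigma> = ?\<tau>" by (simp add: o_inv_distrib o_assoc bij_is_inj)
  then have "inv_len r (\<sigma> \<circ> ?\<tau>) + inv_len r ?\<tau> = inv_len r \<sigma>"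
    using assms(1) by (simp add: weak_le_R_def)
  ultimately show False using inv_len_transpose_pos[OF assms(2,3)] by simp
qed

section \<open>Squares in the Bruhat order\<close>

lemma incr_at_incr_at_in_Iset:
  assumes a: "a \<in> Iset d n" and pq: "p < q" "q < d" and b: "incr_at (incr_at a p) q \<in> Iset d n"
  shows "incr_at a q \<in> Iset d n"
proof -
  have la: "length a = d" using a by (simp add: Iset_def)
  have bq: "incr_at (incr_at a p) q ! i = (if i = q then Suc (a ! q) else if i = p then Suc (a ! p) else a ! i)" for i
    using la pq by (simp add: nth_incr_at)
  have "incr_at (incr_at a p) q ! q \<le> n" using b pq by (simp add: Iset_nth_iff)
  moreover have "incr_at (incr_at a p) q ! q < incr_at (incr_at a p) q ! Suc q" if "Suc q < d"
    using b that by (simp add: Iset_nth_Suc_iff)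
  ultimately show ?thesis using incr_at_in_Iset_iff[OF a pq(2)] pq by (simp add: bq)
qed

text \<open>A point of the interval lies below \<open>a + e\<^sub>p\<close> or above \<open>a + e\<^sub>q\<close>, according to its
  \<open>q\<close>-th entry; \<open>p < q\<close> is needed for \<open>a + e\<^sub>q\<close> to be increasing.\<close>
lemma bru_interval_square:
  assumes a: "a \<in> Iset d n" and pq: "p < q" "q < d"
    and m: "incr_at a p \<in> Iset d n" and b: "incr_at (incr_at a p) q \<in> Iset d n"
  shows "bru_interval d n a (incr_at (incr_at a p) q) = {a, incr_at a p, incr_at a q, incr_at (incr_at a p) q}"
proof -
  let ?m = "incr_at a p" and ?x = "incr_at a q" and ?b = "incr_at (incr_at a p) q"
  have la: "length a = d" using a by (simp add: Iset_def)
  have b_alt: "?b = incr_at ?x p" using la pq by (simp add: incr_at_commute)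
  have mn: "?m ! i = (if i = p then Suc (a ! p) else a ! i)"
    and xn: "?x ! i = (if i = q then Suc (a ! q) else a ! i)"
    and bn: "?b ! i = (if i = q then Suc (a ! q) else ?m ! i)" for i
    using la pq by (simp_all add: nth_incr_at)
  have "z \<in> {a, ?m, ?x, ?b}" if "z \<in> bru_interval d n a ?b" for z
  proof -
    have az: "bru_le a z" and zb: "bru_le z ?b" using that by (simp_all add: bru_interval_def)
    have lz: "length z = d" using az la by (simp add: bru_le_def)
    have "a ! q \<le> z ! q" "z ! q \<le> Suc (a ! q)"
      using az zb la pq by (auto simp: bru_le_def bn dest!: spec[of _ q])
    then consider "z ! q = a ! q" | "z ! q = Suc (a ! q)" by linarith
    then show ?thesis
    proof cases
      case 1
      have "bru_le z ?m"
        unfolding bru_le_def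
      proof (intro conjI allI impI)
        fix k assume "k < length z"
        then have "z ! k \<le> ?b ! k" using zb by (simp add: bru_le_def)
        then show "z ! k \<le> ?m ! k" using 1 pq by (simp add: bn mn split: if_splits)
      qed (simp add: lz la)
      then show ?thesis using bru_le_incr_at_cases[OF az] la pq by auto
    next
      case 2
      have "bru_le ?x z"
        unfolding bru_le_def
      proof (intro conjI allI impI)
        fix k assume "k < length ?x"
        then have "a ! k \<le> z ! k" using az by (simp add: bru_le_def)
        then show "?x ! k \<le> z ! k" using 2 by (simp add: xn)
      qed (simp add: lz la)
      then show ?thesis using bru_le_incr_at_cases[of ?x z p] zb b_alt la pq by auto
    qed
  qed
  moreover have "bru_le a ?m" "bru_le ?m ?b" using la pq by (simp_all add: bru_le_incr_at)
  moreover have "bru_le a ?x" "bru_le ?x ?b" using la pq unfolding b_alt by (simp_all add: bru_le_incr_at)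
  moreover have "?x \<in> Iset d n" using incr_at_incr_at_in_Iset[OF a pq b] .
  ultimately show ?thesis
    using a m b by (auto simp: bru_interval_def bru_le_refl intro: bru_le_trans)
qed

lemma distinct_incr_at_square:
  assumes "p < q" "q < length a"
  shows "distinct [a, incr_at a p, incr_at a q, incr_at (incr_at a p) q]"
proof -
  have "(x ! p, x ! q) \<noteq> (y ! p, y ! q) \<Longrightarrow> x \<noteq> y" for x y :: "nat list" by auto
  moreover have "p < length a" using assms by simp
  ultimately show ?thesis using assms by (simp add: nth_incr_at)
qed

context maximal_chain
begin

lemma E_op_neq_None_if_square:
  assumes "1 \<le> t" "Suc t < length C" "p < q" "q < d"
    and step_p: "C ! t = incr_at (C ! (t - 1)) p" and step_q: "C ! Suc t = incr_at (C ! t) q"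
  shows "E_op d n C t \<noteq> None"
proof -
  let ?a = "C ! (t - 1)" and ?m = "C ! t" and ?x = "incr_at (C ! (t - 1)) q" and ?b = "C ! (t + 1)"
  have a: "?a \<in> Iset d n" and m: "?m \<in> Iset d n" and b: "?b \<in> Iset d n"
    using assms(2) nth_in_Iset by simp_all
  have la: "length ?a = d" using a by (simp add: Iset_def)
  have J: "bru_interval d n ?a ?b = {?a, ?m, ?x, ?b}"
    using bru_interval_square[OF a assms(3,4)] m b step_p step_q by simp
  have "distinct [?a, ?m, ?x, ?b]" using distinct_incr_at_square[of p q ?a] assms(3,4) la step_p step_q by simp
  then have "card (bru_interval d n ?a ?b) = 4" and "bru_interval d n ?a ?b - {?a, ?m, ?b} = {?x}"
    unfolding J by auto
  moreover have "lex_less ?x ?m"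
    using la assms(3,4) step_p by (intro lex_less_if_incr_at_eq[of _ p _ q]) (simp_all add: incr_at_commute)
  ultimately show ?thesis unfolding E_op_def Let_def J by auto
qed

end

theorem proposition2p31:
  fixes d n t :: nat and C :: "nat list list"
  assumes "1 \<le> d" and "d < n"
    and "max_chain d n C"
    and "1 \<le> t" and "t \<le> d * (n - d) - 1"
    and "weak_less_R (d * (n - d)) (sigma d n C \<circ> transpose t (t + 1)) (sigma d n C)"
  shows "E_op d n C t \<noteq> None"
proof -
  interpret maximal_chain d n C using assms(2,3) by unfold_locales simp_all
  have "1 \<le> d * (n - d)" using assms(1,2) by simp
  then have t_le: "Suc t \<le> d * (n - d)" using assms(5) by linarith
  then have t: "Suc t < length C" using length_eq by simp
  obtain p where p: "p < d" "C ! t = incr_at (C ! (t - 1)) p"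
    using nth_Suc_eq_incr_at[of "t - 1"] t assms(4) by auto
  obtain q where q: "q < d" "C ! Suc t = incr_at (C ! t) q"
    using nth_Suc_eq_incr_at[OF t] by blast
  have "sigma d n C (Suc t) < sigma d n C t"
    using assms(4,6) t_le by (intro weak_le_R_comp_transpose_imp_descent) (simp_all add: weak_less_R_def)
  then have "p < q" using sigma_descent_imp_less[OF assms(4) t p(1) q(1) p(2) q(2)] by blast
  then show ?thesis using E_op_neq_None_if_square[OF assms(4) t _ q(1) p(2) q(2)] by blast
qed

end
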